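(* Let $k$ be a field of characteristic $\neq 2$ containing $\sqrt{-1}$, and let $b,\beta$ be independent indeterminates. The affine conic over $k(b,\beta)$ in the variables $a,\alpha$ given by $$a^2\beta(1-\beta^2)=\alpha^2b(1-b^2)+b\beta(b^2-\beta^2)$$ has no $k(b,\beta)$-rational point.
   Context: This conic is the generic fibre of the projection $(a,b,\alpha,\beta)\mapsto(b,\beta)$ restricted to the hypersurface $H$ birational to the Ueno–Campana threefold. *)

theory Defs
  imports "HOL-Computational_Algebra.Polynomial" "HOL-Computational_Algebra.Fraction_Field"
begin

text \<open>The rational function field k(b, beta) in two independent indeterminates is
  realised as Frac(k(b)[beta]), where k(b) = Frac(k[b]).\<close>

type_synonym 'k ratfun2 = "(('k poly) fract poly) fract"

definition var_b :: "'k::field ratfun2" where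
  "var_b = Fract [: Fract [:0, 1:] 1 :] 1"

definition var_beta :: "'k::field ratfun2" where
  "var_beta = Fract [:0, 1:] 1"

end

theory Submission
  imports Defs "HOL-Computational_Algebra.Polynomial_Factorial"
begin

text \<open>Write \<open>F = k(b)\<close> and clear denominators, so that a rational point gives polynomials
  \<open>p, q, d \<in> F[\<beta>]\<close> with \<open>d \<noteq> 0\<close> and
  \<open>p\<^sup>2 \<beta> (1 - \<beta>\<^sup>2) = q\<^sup>2 b (1 - b\<^sup>2) + b \<beta> (b\<^sup>2 - \<beta>\<^sup>2) d\<^sup>2\<close>.
  Setting \<open>\<beta> = 0\<close> forces \<open>\<beta> | q\<close>; cancelling \<open>\<beta>\<close> and setting \<open>\<beta> = 0\<close> again gives
  \<open>p(0)\<^sup>2 = b\<^sup>3 d(0)\<^sup>2\<close>. Since \<open>b\<^sup>3\<close> has odd degree it is not a square in \<open>k(b)\<close>, so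
  \<open>\<beta>\<close> divides \<open>p\<close> and \<open>d\<close>, and dividing out yields a solution with \<open>deg d\<close> smaller:
  an infinite descent. The argument works over any field.\<close>

lemma to_fract_power: "to_fract (x ^ n) = to_fract x ^ n"
  by (induction n) simp_all

lemma square_ne_to_fract_odd_degree:
  fixes s :: "'a::idom poly fract"
  assumes "odd (degree p)"
  shows "s ^ 2 \<noteq> to_fract p"
proof
  assume sq: "s ^ 2 = to_fract p"
  obtain u w where s: "s = Fract u w" and w: "w \<noteq> 0" by (cases s)
  have "Fract (u ^ 2) (w ^ 2) = Fract p 1"
    using sq s by (simp add: to_fract_def power2_eq_square)
  hence eq: "u ^ 2 = p * w ^ 2" using w by (simp add: eq_fract)
  have "p \<noteq> 0" using assms by auto
  hence "u \<noteq> 0" using eq w by auto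
  have "2 * degree u = degree p + 2 * degree w"
    using arg_cong[OF eq, of degree] \<open>u \<noteq> 0\<close> \<open>p \<noteq> 0\<close> w
    by (simp add: degree_mult_eq degree_power_eq)
  with assms show False by presburger
qed

lemma fract_common_denominator:
  fixes x y :: "'a::idom fract"
  obtains p q d where "d \<noteq> 0" "x = to_fract p / to_fract d" "y = to_fract q / to_fract d"
proof -
  obtain p1 d1 where x: "x = Fract p1 d1" and d1: "d1 \<noteq> 0" by (cases x)
  obtain q1 d2 where y: "y = Fract q1 d2" and d2: "d2 \<noteq> 0" by (cases y)
  show thesis
  proof
    show "d1 * d2 \<noteq> 0" using d1 d2 by simp
    show "x = to_fract (p1 * d2) / to_fract (d1 * d2)"
      using x d1 d2 by (simp add: Fract_conv_to_fract)
    show "y = to_fract (q1 * d1) / to_fract (d1 * d2)"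
      using y d1 d2 by (simp add: Fract_conv_to_fract mult.commute)
  qed
qed

text \<open>The conic over \<open>F(\<beta>)\<close> with \<open>b\<close> replaced by a constant \<open>c \<in> F\<close>; the point
  \<open>(a, \<alpha>) = (p/d, q/d)\<close> is recorded by its numerators and common denominator in \<open>F[\<beta>]\<close>.\<close>

definition conic_solution :: "'a::field \<Rightarrow> 'a poly \<Rightarrow> 'a poly \<Rightarrow> 'a poly \<Rightarrow> bool" where
  "conic_solution c p q d \<longleftrightarrow>
     p ^ 2 * [:0, 1:] * (1 - [:0, 1:] ^ 2)
       = q ^ 2 * [:c:] * (1 - [:c:] ^ 2) + [:c:] * [:0, 1:] * ([:c:] ^ 2 - [:0, 1:] ^ 2) * d ^ 2"

lemma conic_solution_descent:
  fixes c :: "'a::field"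
  assumes c: "c \<noteq> 0" "1 - c ^ 2 \<noteq> 0" and no_root: "\<And>s. s ^ 2 \<noteq> c ^ 3"
    and sol: "conic_solution c p q d" and "d \<noteq> 0"
  obtains p' q' d' where "conic_solution c p' q' d'" "d' \<noteq> 0" "degree d' < degree d"
proof -
  let ?X = "[:0, 1::'a:]"
  have eq: "p ^ 2 * ?X * (1 - ?X ^ 2)
      = q ^ 2 * [:c:] * (1 - [:c:] ^ 2) + [:c:] * ?X * ([:c:] ^ 2 - ?X ^ 2) * d ^ 2"
    using sol by (simp add: conic_solution_def)
  have "poly q 0 ^ 2 * (c * (1 - c ^ 2)) = 0"
    using arg_cong[OF eq, of "\<lambda>r. poly r 0"] by (simp add: algebra_simps)
  hence "poly q 0 = 0" using c by simp
  then obtain q' where q: "q = ?X * q'" by (auto simp: poly_eq_0_iff_dvd elim: dvdE)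
  have "?X * (p ^ 2 * (1 - ?X ^ 2))
      = ?X * (?X * q' ^ 2 * [:c:] * (1 - [:c:] ^ 2) + [:c:] * ([:c:] ^ 2 - ?X ^ 2) * d ^ 2)"
    using eq unfolding q by (simp add: algebra_simps power2_eq_square)
  hence eq': "p ^ 2 * (1 - ?X ^ 2)
      = ?X * q' ^ 2 * [:c:] * (1 - [:c:] ^ 2) + [:c:] * ([:c:] ^ 2 - ?X ^ 2) * d ^ 2"
    by (rule mult_left_cancel[THEN iffD1, rotated]) simp
  have "poly p 0 ^ 2 = c ^ 3 * poly d 0 ^ 2"
    using arg_cong[OF eq', of "\<lambda>r. poly r 0"]
    by (simp add: algebra_simps power2_eq_square power3_eq_cube)
  moreover have "poly d 0 = 0"
  proof (rule ccontr)
    assume "poly d 0 \<noteq> 0"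
    with \<open>poly p 0 ^ 2 = c ^ 3 * poly d 0 ^ 2\<close> have "(poly p 0 / poly d 0) ^ 2 = c ^ 3"
      by (simp add: power_divide)
    with no_root show False by blast
  qed
  ultimately have "poly p 0 = 0" by simp
  then obtain p' where p: "p = ?X * p'" by (auto simp: poly_eq_0_iff_dvd elim: dvdE)
  obtain d' where d: "d = ?X * d'"
    using \<open>poly d 0 = 0\<close> by (auto simp: poly_eq_0_iff_dvd elim: dvdE)
  have "d' \<noteq> 0" using \<open>d \<noteq> 0\<close> d by auto
  have "?X ^ 2 * (p' ^ 2 * ?X * (1 - ?X ^ 2)) = ?X ^ 2 * (q' ^ 2 * [:c:] * (1 - [:c:] ^ 2)
      + [:c:] * ?X * ([:c:] ^ 2 - ?X ^ 2) * d' ^ 2)"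
    using eq unfolding p q d by (simp add: algebra_simps power2_eq_square)
  hence "conic_solution c p' q' d'"
    unfolding conic_solution_def by (rule mult_left_cancel[THEN iffD1, rotated]) simp
  moreover have "degree d' < degree d" using d \<open>d' \<noteq> 0\<close> by (simp add: degree_mult_eq)
  ultimately show thesis using that \<open>d' \<noteq> 0\<close> by blast
qed

lemma no_conic_solution:
  fixes c :: "'a::field"
  assumes "c \<noteq> 0" "1 - c ^ 2 \<noteq> 0" "\<And>s. s ^ 2 \<noteq> c ^ 3"
  shows "d \<noteq> 0 \<Longrightarrow> \<not> conic_solution c p q d"
proof (induction "degree d" arbitrary: p q d rule: less_induct)
  case less
  show ?case
  proof
    assume "conic_solution c p q d"
    then obtain p' q' d'
      where "conic_solution c p' q' d'" "d' \<noteq> 0" "degree d' < degree d"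
      using conic_solution_descent[OF assms _ less.prems] by blast
    with less.hyps show False by blast
  qed
qed

lemma indeterminate_conic_hypotheses:
  defines "c \<equiv> to_fract [:0, 1::'k::field:]"
  shows "c \<noteq> 0" "1 - c ^ 2 \<noteq> 0" "\<And>s. s ^ 2 \<noteq> c ^ 3"
proof -
  show "c \<noteq> 0" by (simp add: c_def)
  have "coeff (1 - [:0, 1::'k:] ^ 2) 0 = 1" by (simp add: power2_eq_square)
  hence "1 - [:0, 1::'k:] ^ 2 \<noteq> 0" by auto
  thus "1 - c ^ 2 \<noteq> 0" by (metis c_def to_fract_1 to_fract_diff to_fract_eq_0_iff to_fract_power)
  show "s ^ 2 \<noteq> c ^ 3" for s
    unfolding c_def to_fract_power[symmetric]
    by (rule square_ne_to_fract_odd_degree) (simp add: degree_power_eq)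
qed

theorem mainTheorem8:
  fixes i :: "'k::field"
  assumes "(2::'k) \<noteq> 0"
    and "i ^ 2 = -1"
  shows "\<not> (\<exists>a \<alpha> :: 'k ratfun2.
            a ^ 2 * var_beta * (1 - var_beta ^ 2)
              = \<alpha> ^ 2 * var_b * (1 - var_b ^ 2) + var_b * var_beta * (var_b ^ 2 - var_beta ^ 2))"
proof
  assume "\<exists>a \<alpha> :: 'k ratfun2. a ^ 2 * var_beta * (1 - var_beta ^ 2)
            = \<alpha> ^ 2 * var_b * (1 - var_b ^ 2) + var_b * var_beta * (var_b ^ 2 - var_beta ^ 2)"
  then obtain a \<alpha> :: "'k ratfun2" where eq: "a ^ 2 * var_beta * (1 - var_beta ^ 2)
            = \<alpha> ^ 2 * var_b * (1 - var_b ^ 2) + var_b * var_beta * (var_b ^ 2 - var_beta ^ 2)"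
    by blast
  obtain p q d where d: "d \<noteq> 0"
    and a: "a = to_fract p / to_fract d" and \<alpha>: "\<alpha> = to_fract q / to_fract d"
    by (rule fract_common_denominator)
  define c where "c = to_fract [:0, 1::'k:]"
  have b: "var_b = to_fract [:c:]" and \<beta>: "var_beta = to_fract [:0, 1:]"
    by (simp_all add: var_b_def var_beta_def c_def to_fract_def)
  have "to_fract p ^ 2 * to_fract [:0, 1:] * (1 - to_fract [:0, 1:] ^ 2)
      = to_fract q ^ 2 * to_fract [:c:] * (1 - to_fract [:c:] ^ 2)
        + to_fract [:c:] * to_fract [:0, 1:] * (to_fract [:c:] ^ 2 - to_fract [:0, 1:] ^ 2)
          * to_fract d ^ 2"
    using eq d unfolding a \<alpha> b \<beta> by (simp add: field_simps)
  hence "conic_solution c p q d"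
    unfolding conic_solution_def
    by (simp only: to_fract_power[symmetric] to_fract_mult[symmetric] to_fract_diff[symmetric]
        to_fract_add[symmetric] to_fract_1[symmetric] to_fract_eq_iff)
  with no_conic_solution[OF indeterminate_conic_hypotheses d] show False
    unfolding c_def by blast
qed

end
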